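(* Let $(\mathbb R^2,0)\xrightarrow{\gamma_1}(\mathbb R^2,0)\xleftarrow{\gamma_2}(\mathbb R^2,0)$ be a pair of $C^\infty$ map germs such that $\gamma_1,\gamma_2$ are both fold map germs and the discriminant sets $\gamma_1(S_{\gamma_1})$, $\gamma_2(S_{\gamma_2})$ are transversal at $0$. Then there exist smooth coordinate systems in the two source spaces and in the common target space in which $\gamma_1(x_1,y_1)=(x_1,y_1^2)$ and $\gamma_2(x_2,y_2)=(x_2^2,y_2)$.
   Context: $S_g$ denotes the singular set of a map germ $g$. *)

theory Defs
  imports "HOL-Analysis.Analysis"
begin

type_synonym R2 = "real \<times> real"

fun Ck_on :: "nat \<Rightarrow> 'a::euclidean_space set \<Rightarrow> ('a \<Rightarrow> 'b::real_normed_vector) \<Rightarrow> bool" where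
  "Ck_on 0 S f = continuous_on S f"
| "Ck_on (Suc k) S f = ((\<forall>x\<in>S. f differentiable (at x)) \<and>
      (\<forall>v. Ck_on k S (\<lambda>x. frechet_derivative f (at x) v)))"

definition smooth_on :: "'a::euclidean_space set \<Rightarrow> ('a \<Rightarrow> 'b::real_normed_vector) \<Rightarrow> bool" where
  "smooth_on S f \<longleftrightarrow> (\<forall>k. Ck_on k S f)"

definition map_germ :: "(R2 \<Rightarrow> R2) \<Rightarrow> bool" where
  "map_germ f \<longleftrightarrow> f 0 = 0 \<and> (\<exists>U. open U \<and> 0 \<in> U \<and> smooth_on U f)"

definition diffeo_germ :: "(R2 \<Rightarrow> R2) \<Rightarrow> bool" where
  "diffeo_germ \<phi> \<longleftrightarrow> \<phi> 0 = 0 \<and>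
     (\<exists>U V \<psi>. open U \<and> open V \<and> 0 \<in> U \<and> \<phi> ` U = V \<and> smooth_on U \<phi> \<and> smooth_on V \<psi> \<and>
        (\<forall>x\<in>U. \<psi> (\<phi> x) = x) \<and> (\<forall>y\<in>V. \<phi> (\<psi> y) = y))"

definition fold_x :: "R2 \<Rightarrow> R2" where
  "fold_x p = (fst p, (snd p)^2)"

definition fold_y :: "R2 \<Rightarrow> R2" where
  "fold_y p = ((fst p)^2, snd p)"

definition A_equivalent :: "(R2 \<Rightarrow> R2) \<Rightarrow> (R2 \<Rightarrow> R2) \<Rightarrow> bool" where
  "A_equivalent f g \<longleftrightarrow> (\<exists>\<phi> \<psi>. diffeo_germ \<phi> \<and> diffeo_germ \<psi> \<and>
      (\<forall>\<^sub>F p in nhds 0. \<psi> (f p) = g (\<phi> p)))"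

definition fold_germ :: "(R2 \<Rightarrow> R2) \<Rightarrow> bool" where
  "fold_germ f \<longleftrightarrow> map_germ f \<and> A_equivalent f fold_x"

definition singular_set :: "(R2 \<Rightarrow> R2) \<Rightarrow> R2 set \<Rightarrow> R2 set" where
  "singular_set f U = {p \<in> U. dim (range (frechet_derivative f (at p))) < DIM(R2)}"

definition tangent_cone0 :: "R2 set \<Rightarrow> R2 set" where
  "tangent_cone0 D = {v. \<exists>x t. (\<forall>n. x n \<in> D \<and> t n > 0) \<and> t \<longlonglongrightarrow> 0 \<and>
       (\<lambda>n. (1 / t n) *\<^sub>R x n) \<longlonglongrightarrow> v}"

text \<open>Transversality at 0 of the discriminant germs g1(S_g1), g2(S_g2): for all
  (sufficiently small) neighbourhoods of 0 the tangent cones at 0 of the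
  discriminants span R^2, i.e. T_0 D1 + T_0 D2 = R^2.\<close>
definition discriminants_transversal :: "(R2 \<Rightarrow> R2) \<Rightarrow> (R2 \<Rightarrow> R2) \<Rightarrow> bool" where
  "discriminants_transversal g1 g2 \<longleftrightarrow>
     (\<exists>U0. open U0 \<and> 0 \<in> U0 \<and> smooth_on U0 g1 \<and> smooth_on U0 g2 \<and>
       (\<forall>U1 U2. open U1 \<and> open U2 \<and> 0 \<in> U1 \<and> 0 \<in> U2 \<and> U1 \<subseteq> U0 \<and> U2 \<subseteq> U0 \<longrightarrow>
          {u + v | u v. u \<in> tangent_cone0 (g1 ` singular_set g1 U1) \<and>
                        v \<in> tangent_cone0 (g2 ` singular_set g2 U2)} = UNIV))"

end

theory Submission
  imports Defs
begin

(* Write each gamma_i in fold normal form psi_i o gamma_i = fold_x o phi_i and put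
   f_i = snd o psi_i. The discriminant of gamma_i lies in the zero set of f_i, so its tangent
   cone at 0 lies in ker df_i(0); transversality of the discriminants therefore makes df_1(0)
   and df_2(0) linearly independent, and Psi = (f_2, f_1) is a target coordinate system.
   Then Psi o gamma_1 = fold_x o (f_2 o gamma_1, snd o phi_1) and
   Psi o gamma_2 = fold_y o (snd o phi_2, f_1 o gamma_2). The new source maps are
   diffeomorphism germs: dgamma_1(0) takes values in ker df_1(0), on which df_2(0) is
   injective, and it vanishes exactly where d(fst o phi_1)(0) does (symmetrically for
   gamma_2). *)

section \<open>Calculus of \<open>C\<^sup>k\<close> maps\<close>

lemma Ck_on_cong:
  assumes "open S" "\<And>x. x \<in> S \<Longrightarrow> f x = g x" "Ck_on k S f"
  shows "Ck_on k S g"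
  using assms(2,3)
proof (induction k arbitrary: f g)
  case 0
  then show ?case using continuous_on_cong by (metis Ck_on.simps(1))
next
  case (Suc k)
  have deriv: "(g has_derivative frechet_derivative f (at x)) (at x)" if "x \<in> S" for x
    using Suc.prems that assms(1)
    by (intro has_derivative_transform_within_open[of f _ x UNIV S g])
       (auto simp flip: frechet_derivative_works)
  have "frechet_derivative g (at x) = frechet_derivative f (at x)" if "x \<in> S" for x
    using deriv[OF that] frechet_derivative_at by metis
  then have "Ck_on k S (\<lambda>x. frechet_derivative g (at x) v)" for v
    using Suc.IH[of "\<lambda>x. frechet_derivative f (at x) v"] Suc.prems(2) by simp
  moreover have "\<forall>x\<in>S. g differentiable (at x)"
    using deriv differentiableI by blast
  ultimately show ?case by simp
qed

lemma Ck_on_SucI: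
  assumes "open S" "\<And>x. x \<in> S \<Longrightarrow> (f has_derivative f' x) (at x)"
    and "\<And>v. Ck_on k S (\<lambda>x. f' x v)"
  shows "Ck_on (Suc k) S f"
proof -
  have "f' x v = frechet_derivative f (at x) v" if "x \<in> S" for x v
    using frechet_derivative_at[OF assms(2)[OF that]] by simp
  then have "Ck_on k S (\<lambda>x. frechet_derivative f (at x) v)" for v
    by (rule Ck_on_cong[OF assms(1) _ assms(3)])
  moreover have "\<forall>x\<in>S. f differentiable (at x)"
    using assms(2) differentiableI by blast
  ultimately show ?thesis by simp
qed

lemma Ck_on_SucD:
  "Ck_on (Suc k) S f \<Longrightarrow> x \<in> S \<Longrightarrow> (f has_derivative frechet_derivative f (at x)) (at x)"
  by (simp add: frechet_derivative_works)

lemma Ck_on_Suc_imp: "Ck_on (Suc k) S f \<Longrightarrow> Ck_on k S f"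
proof (induction k arbitrary: f)
  case 0
  then show ?case
    by (auto intro!: continuous_at_imp_continuous_on differentiable_imp_continuous_within)
qed auto

lemma Ck_on_subset: "Ck_on k S f \<Longrightarrow> T \<subseteq> S \<Longrightarrow> Ck_on k T f"
  by (induction k arbitrary: f) (auto intro: continuous_on_subset)

lemma Ck_on_const: "Ck_on k S (\<lambda>x. c)"
  by (induction k arbitrary: c) auto

lemma Ck_on_add:
  assumes "open S" "Ck_on k S f" "Ck_on k S g"
  shows "Ck_on k S (\<lambda>x. f x + g x)"
  using assms(2,3)
proof (induction k arbitrary: f g)
  case 0
  then show ?case by (auto intro: continuous_on_add)
next
  case (Suc k)
  show ?case
  proof (rule Ck_on_SucI[OF assms(1)])
    fix x assume "x \<in> S"
    with Suc.prems show "((\<lambda>x. f x + g x) has_derivative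
        (\<lambda>v. frechet_derivative f (at x) v + frechet_derivative g (at x) v)) (at x)"
      by (intro has_derivative_add Ck_on_SucD)
  qed (use Suc in simp)
qed

lemma Ck_on_bounded_linear:
  assumes "open S" "bounded_linear L" "Ck_on k S f"
  shows "Ck_on k S (\<lambda>x. L (f x))"
  using assms(3)
proof (induction k arbitrary: f)
  case 0
  then show ?case
    using continuous_on_compose2[of UNIV L S f] linear_continuous_on[OF assms(2)] by auto
next
  case (Suc k)
  show ?case
  proof (rule Ck_on_SucI[OF assms(1)])
    fix x assume "x \<in> S"
    with Suc.prems show "((\<lambda>x. L (f x)) has_derivative
        (\<lambda>v. L (frechet_derivative f (at x) v))) (at x)"
      by (intro bounded_linear.has_derivative[OF assms(2)] Ck_on_SucD)
  qed (use Suc in simp)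
qed

lemma Ck_on_bounded_bilinear:
  assumes "open S" "bounded_bilinear B" "Ck_on k S f" "Ck_on k S g"
  shows "Ck_on k S (\<lambda>x. B (f x) (g x))"
  using assms(3,4)
proof (induction k arbitrary: f g)
  case 0
  then show ?case using bounded_bilinear.continuous_on[OF assms(2)] by simp
next
  case (Suc k)
  show ?case
  proof (rule Ck_on_SucI[OF assms(1)])
    fix x assume "x \<in> S"
    with Suc.prems show "((\<lambda>x. B (f x) (g x)) has_derivative (\<lambda>v.
        B (f x) (frechet_derivative g (at x) v) + B (frechet_derivative f (at x) v) (g x))) (at x)"
      by (intro bounded_bilinear.FDERIV[OF assms(2)] Ck_on_SucD)
  next
    fix v
    have "Ck_on k S f" "Ck_on k S g"
      using Suc.prems Ck_on_Suc_imp by blast+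
    with Suc show "Ck_on k S (\<lambda>x.
        B (f x) (frechet_derivative g (at x) v) + B (frechet_derivative f (at x) v) (g x))"
      by (intro Ck_on_add[OF assms(1)] Suc.IH) simp_all
  qed
qed

lemma Ck_on_Pair:
  assumes "open S" "Ck_on k S f" "Ck_on k S g"
  shows "Ck_on k S (\<lambda>x. (f x, g x))"
proof -
  have "Ck_on k S (\<lambda>x. (f x, 0))" "Ck_on k S (\<lambda>x. (0, g x))"
    using Ck_on_bounded_linear[OF assms(1) bounded_linear_Pair[OF bounded_linear_ident bounded_linear_zero] assms(2)]
      Ck_on_bounded_linear[OF assms(1) bounded_linear_Pair[OF bounded_linear_zero bounded_linear_ident] assms(3)]
    by simp_all
  then have "Ck_on k S (\<lambda>x. (f x, 0) + (0, g x))"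
    by (rule Ck_on_add[OF assms(1)])
  then show ?thesis by simp
qed

lemma Ck_on_sum:
  assumes "open S" "finite I" "\<And>i. i \<in> I \<Longrightarrow> Ck_on k S (f i)"
  shows "Ck_on k S (\<lambda>x. \<Sum>i\<in>I. f i x)"
  using assms(2,3)
  by (induction I rule: finite_induct) (simp_all add: Ck_on_const Ck_on_add[OF assms(1)])

lemma Ck_on_diff:
  assumes "open S" "Ck_on k S f" "Ck_on k S g"
  shows "Ck_on k S (\<lambda>x. f x - g x)"
  using Ck_on_add[OF assms(1,2) Ck_on_bounded_linear[OF assms(1) bounded_linear_minus[OF bounded_linear_ident] assms(3)]]
  by simp

lemma linear_sum_Basis:
  fixes L :: "'a::euclidean_space \<Rightarrow> 'b::real_vector"
  assumes "linear L"
  shows "L w = (\<Sum>b\<in>Basis. (w \<bullet> b) *\<^sub>R L b)"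
proof -
  have "L w = L (\<Sum>b\<in>Basis. (w \<bullet> b) *\<^sub>R b)"
    by (simp add: euclidean_representation)
  also have "\<dots> = (\<Sum>b\<in>Basis. (w \<bullet> b) *\<^sub>R L b)"
    by (simp add: linear_sum[OF assms] linear_cmul[OF assms])
  finally show ?thesis .
qed

lemma Ck_on_compose:
  assumes "open S" "Ck_on k S f" "f ` S \<subseteq> T" "Ck_on k T g"
  shows "Ck_on k S (\<lambda>x. g (f x))"
  using assms(2,4)
proof (induction k arbitrary: g)
  case 0
  then show ?case using continuous_on_compose2[OF _ _ assms(3)] by simp
next
  case (Suc k)
  \<comment> \<open>in this form the induction hypothesis applies to the partial derivatives of \<open>g\<close>\<close>
  have deriv: "((\<lambda>x. g (f x)) has_derivative (\<lambda>v.
      \<Sum>b\<in>Basis. (frechet_derivative f (at x) v \<bullet> b) *\<^sub>R frechet_derivative g (at (f x)) b)) (at x)"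
    if "x \<in> S" for x
  proof -
    have lin: "linear (frechet_derivative g (at (f x)))"
      using Suc.prems(2) that assms(3) by (intro linear_frechet_derivative) auto
    have "f x \<in> T" using that assms(3) by blast
    have "((\<lambda>x. g (f x)) has_derivative
        (\<lambda>v. frechet_derivative g (at (f x)) (frechet_derivative f (at x) v))) (at x)"
      by (rule has_derivative_compose[OF Ck_on_SucD[OF Suc.prems(1) that] Ck_on_SucD[OF Suc.prems(2) \<open>f x \<in> T\<close>]])
    then show ?thesis
      by (rule has_derivative_eq_rhs) (rule ext, rule linear_sum_Basis[OF lin])
  qed
  show ?case
  proof (rule Ck_on_SucI[OF assms(1) deriv])
    fix v
    have "Ck_on k S (\<lambda>x. frechet_derivative g (at (f x)) b)" for b
      using Suc.IH[OF Ck_on_Suc_imp[OF Suc.prems(1)], of "\<lambda>y. frechet_derivative g (at y) b"]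
        Suc.prems(2) by simp
    moreover have "Ck_on k S (\<lambda>x. frechet_derivative f (at x) v)"
      using Suc.prems(1) by simp
    ultimately show "Ck_on k S (\<lambda>x.
        \<Sum>b\<in>Basis. (frechet_derivative f (at x) v \<bullet> b) *\<^sub>R frechet_derivative g (at (f x)) b)"
      by (intro Ck_on_sum assms(1) finite_Basis
          Ck_on_bounded_bilinear[OF assms(1) bounded_bilinear_scaleR]
          Ck_on_bounded_linear[OF assms(1) bounded_linear_inner_left])
  qed
qed

lemma Ck_on_inverse:
  fixes h :: "'a::euclidean_space \<Rightarrow> real"
  assumes "open S" "Ck_on k S h" "\<And>x. x \<in> S \<Longrightarrow> h x \<noteq> 0"
  shows "Ck_on k S (\<lambda>x. inverse (h x))"
  using assms(2)
proof (induction k)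
  case 0
  then show ?case using continuous_on_inverse[of S h] assms(3) by auto
next
  case (Suc k)
  show ?case
  proof (rule Ck_on_SucI[OF assms(1)])
    fix x assume "x \<in> S"
    show "((\<lambda>x. inverse (h x)) has_derivative
        (\<lambda>v. - (inverse (h x) * frechet_derivative h (at x) v * inverse (h x)))) (at x)"
      by (rule Deriv.has_derivative_inverse[OF assms(3)[OF \<open>x \<in> S\<close>] Ck_on_SucD[OF Suc.prems \<open>x \<in> S\<close>]])
  next
    fix v
    have "Ck_on k S h" "Ck_on k S (\<lambda>x. frechet_derivative h (at x) v)"
      using Suc.prems Ck_on_Suc_imp by auto
    with Suc.IH show "Ck_on k S (\<lambda>x. - (inverse (h x) * frechet_derivative h (at x) v * inverse (h x)))"
      by (intro Ck_on_bounded_linear[OF assms(1) bounded_linear_minus[OF bounded_linear_ident]]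
          Ck_on_bounded_bilinear[OF assms(1) bounded_bilinear_mult])
  qed
qed

section \<open>Smooth maps and local diffeomorphisms of the plane\<close>

lemma smooth_on_subset: "smooth_on S f \<Longrightarrow> T \<subseteq> S \<Longrightarrow> smooth_on T f"
  unfolding smooth_on_def using Ck_on_subset by blast

lemma smooth_on_continuous_on: "smooth_on S f \<Longrightarrow> continuous_on S f"
  unfolding smooth_on_def by (metis Ck_on.simps(1))

lemma smooth_on_has_derivative:
  "smooth_on S f \<Longrightarrow> x \<in> S \<Longrightarrow> (f has_derivative frechet_derivative f (at x)) (at x)"
  unfolding smooth_on_def by (metis Ck_on_SucD)

lemma smooth_on_bounded_linear:
  "open S \<Longrightarrow> bounded_linear L \<Longrightarrow> smooth_on S f \<Longrightarrow> smooth_on S (\<lambda>x. L (f x))"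
  unfolding smooth_on_def by (blast intro: Ck_on_bounded_linear)

lemma smooth_on_Pair:
  "open S \<Longrightarrow> smooth_on S f \<Longrightarrow> smooth_on S g \<Longrightarrow> smooth_on S (\<lambda>x. (f x, g x))"
  unfolding smooth_on_def by (blast intro: Ck_on_Pair)

lemma smooth_on_compose:
  "open S \<Longrightarrow> smooth_on S f \<Longrightarrow> f ` S \<subseteq> T \<Longrightarrow> smooth_on T g \<Longrightarrow> smooth_on S (\<lambda>x. g (f x))"
  unfolding smooth_on_def by (blast intro: Ck_on_compose)

lemma linear_R2_coordinates:
  fixes L :: "R2 \<Rightarrow> R2"
  assumes "linear L"
  shows "L v = (fst (L (1,0)) * fst v + fst (L (0,1)) * snd v, snd (L (1,0)) * fst v + snd (L (0,1)) * snd v)"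
proof -
  have "v = fst v *\<^sub>R (1,0) + snd v *\<^sub>R (0,1)"
    by (cases v) simp
  then have "L v = fst v *\<^sub>R L (1,0) + snd v *\<^sub>R L (0,1)"
    by (metis linear_add[OF assms] linear_cmul[OF assms])
  then show ?thesis by (simp add: prod_eq_iff mult.commute)
qed

lemma linear_R2_inv:
  fixes L :: "R2 \<Rightarrow> R2"
  assumes "linear L" "inj L"
  defines "a \<equiv> fst (L (1,0))" and "b \<equiv> fst (L (0,1))" and "c \<equiv> snd (L (1,0))" and "d \<equiv> snd (L (0,1))"
  shows "a * d - b * c \<noteq> 0"
    and "inv L w = ((d * fst w - b * snd w) / (a * d - b * c), (a * snd w - c * fst w) / (a * d - b * c))"
proof -
  have L: "L v = (a * fst v + b * snd v, c * fst v + d * snd v)" for v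
    unfolding a_def b_def c_def d_def by (rule linear_R2_coordinates[OF assms(1)])
  obtain v u where "L v = (1,0)" "L u = (0,1)"
    using linear_injective_imp_surjective[OF assms(1,2)] by (metis surjD)
  then have v: "a * fst v + b * snd v = 1" "c * fst v + d * snd v = 0"
    and u: "a * fst u + b * snd u = 0" "c * fst u + d * snd u = 1"
    unfolding L by simp_all
  \<comment> \<open>multiplicativity of the determinant, applied to \<open>L \<circ> (v u) = id\<close>\<close>
  have "(a * d - b * c) * (fst v * snd u - snd v * fst u) =
      (a * fst v + b * snd v) * (c * fst u + d * snd u) - (c * fst v + d * snd v) * (a * fst u + b * snd u)"
    by (simp add: algebra_simps)
  then have "(a * d - b * c) * (fst v * snd u - snd v * fst u) = 1"
    unfolding v u by simp
  then show det: "a * d - b * c \<noteq> 0" by auto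
  let ?M = "((d * fst w - b * snd w) / (a * d - b * c), (a * snd w - c * fst w) / (a * d - b * c))"
  have "a * fst ?M + b * snd ?M = fst w" "c * fst ?M + d * snd ?M = snd w"
    using det by (simp_all add: divide_simps) (simp_all add: algebra_simps)
  then have "L ?M = w"
    unfolding L by (simp add: prod_eq_iff)
  then show "inv L w = ?M"
    using inv_f_f[OF assms(2), of ?M] by simp
qed

lemma Ck_on_inv_frechet_derivative_R2:
  fixes f :: "R2 \<Rightarrow> R2"
  assumes "open U" "smooth_on U f" and inj: "\<And>x. x \<in> U \<Longrightarrow> inj (frechet_derivative f (at x))"
  shows "Ck_on k U (\<lambda>x. inv (frechet_derivative f (at x)) w)"
proof -
  define a where "a x = fst (frechet_derivative f (at x) (1,0))" for x
  define b where "b x = fst (frechet_derivative f (at x) (0,1))" for x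
  define c where "c x = snd (frechet_derivative f (at x) (1,0))" for x
  define d where "d x = snd (frechet_derivative f (at x) (0,1))" for x
  have lin: "linear (frechet_derivative f (at x))" if "x \<in> U" for x
    using smooth_on_has_derivative[OF assms(2) that] has_derivative_linear by blast
  have det: "a x * d x - b x * c x \<noteq> 0" if "x \<in> U" for x
    using linear_R2_inv(1)[OF lin inj, OF that that] unfolding a_def b_def c_def d_def .
  have Df: "Ck_on k U (\<lambda>x. frechet_derivative f (at x) v)" for k v
    using assms(2) unfolding smooth_on_def by (metis Ck_on.simps(2))
  then have "Ck_on k U a" "Ck_on k U b" "Ck_on k U c" "Ck_on k U d" for k
    unfolding a_def b_def c_def d_def
    using Ck_on_bounded_linear[OF assms(1) bounded_linear_fst Df]
      Ck_on_bounded_linear[OF assms(1) bounded_linear_snd Df] by blast+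
  then have cramer: "Ck_on k U (\<lambda>x. ((d x * fst w - b x * snd w) / (a x * d x - b x * c x),
                              (a x * snd w - c x * fst w) / (a x * d x - b x * c x)))"
    unfolding divide_inverse using det
    by (intro Ck_on_Pair Ck_on_bounded_bilinear[OF assms(1) bounded_bilinear_mult] Ck_on_diff
        Ck_on_inverse Ck_on_const assms(1)) auto
  have inv: "inv (frechet_derivative f (at x)) w =
      ((d x * fst w - b x * snd w) / (a x * d x - b x * c x),
       (a x * snd w - c x * fst w) / (a x * d x - b x * c x))" if "x \<in> U" for x
    using linear_R2_inv(2)[OF lin inj, OF that that] unfolding a_def b_def c_def d_def .
  show ?thesis
    by (rule Ck_on_cong[OF assms(1) _ cramer]) (simp add: inv)
qed

lemma smooth_on_local_inverse_R2:
  fixes f g :: "R2 \<Rightarrow> R2"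
  assumes "open U" "open V" "smooth_on U f" "g ` V \<subseteq> U" "continuous_on V g"
    and "\<And>x. x \<in> U \<Longrightarrow> inj (frechet_derivative f (at x))"
    and deriv: "\<And>y. y \<in> V \<Longrightarrow> (g has_derivative inv (frechet_derivative f (at (g y)))) (at y)"
  shows "smooth_on V g"
proof -
  \<comment> \<open>\<open>dg = (df)\<^sup>-\<^sup>1 \<circ> g\<close> with \<open>(df)\<^sup>-\<^sup>1\<close> smooth, so \<open>g \<in> C\<^sup>k\<close> implies \<open>g \<in> C\<^sup>k\<^sup>+\<^sup>1\<close>\<close>
  have "Ck_on k V g" for k
  proof (induction k)
    case 0
    then show ?case using assms(5) by simp
  next
    case (Suc k)
    show ?case
      by (rule Ck_on_SucI[OF assms(2) deriv Ck_on_compose[OF assms(2) Suc.IH assms(4)]])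
        (use Ck_on_inv_frechet_derivative_R2[OF assms(1,3,6)] in auto)
  qed
  then show ?thesis unfolding smooth_on_def ..
qed

lemma diffeo_germI:
  assumes "open U" "0 \<in> U" "smooth_on U f" "f 0 = 0" "inj (frechet_derivative f (at 0))"
  shows "diffeo_germ f"
proof -
  define F where "F x = Blinfun (frechet_derivative f (at x))" for x
  have deriv: "(f has_derivative frechet_derivative f (at x)) (at x)" if "x \<in> U" for x
    using smooth_on_has_derivative[OF assms(3) that] .
  have F: "blinfun_apply (F x) = frechet_derivative f (at x)" if "x \<in> U" for x
    unfolding F_def using deriv[OF that] has_derivative_bounded_linear bounded_linear_Blinfun_apply
    by blast
  have "continuous_on U (\<lambda>x. frechet_derivative f (at x) v)" for v
    using assms(3) unfolding smooth_on_def by (metis Ck_on.simps One_nat_def)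
  then have contF: "continuous_on U F"
    by (intro continuous_on_blinfun_componentwise) (simp add: F cong: continuous_on_cong)
  obtain M where M: "linear M" "M \<circ> frechet_derivative f (at 0) = id"
    using linear_injective_left_inverse[OF has_derivative_linear[OF deriv] assms(5)] assms(2) by blast
  then have "M (frechet_derivative f (at 0) v) = v" for v
    by (metis comp_apply id_apply)
  with M(1) have "Blinfun M o\<^sub>L F 0 = id_blinfun"
    using F[OF assms(2)]
    by (intro blinfun_eqI) (simp add: bounded_linear_Blinfun_apply linear_conv_bounded_linear)
  then obtain U' V g g' where UV: "open U'" "U' \<subseteq> U" "0 \<in> U'" "open V"
    and hom: "homeomorphism U' V f g"
    and g': "\<And>y. y \<in> V \<Longrightarrow> (g has_derivative (g' y)) (at y)"
      "\<And>y. y \<in> V \<Longrightarrow> g' y = inv (blinfun_apply (F (g y)))"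
      "\<And>y. y \<in> V \<Longrightarrow> bij (blinfun_apply (F (g y)))"
    using inverse_function_theorem[OF assms(1) _ contF assms(2)] deriv F by metis
  have inv: "\<forall>x\<in>U'. g (f x) = x" "\<forall>y\<in>V. f (g y) = y" "f ` U' = V" "g ` V = U'" "continuous_on V g"
    using hom unfolding homeomorphism_def by auto
  have "inj (frechet_derivative f (at x))" if "x \<in> U'" for x
    using g'(3)[of "f x"] F[of x] inv that UV(2) bij_is_inj by fastforce
  moreover have "(g has_derivative inv (frechet_derivative f (at (g y)))) (at y)" if "y \<in> V" for y
  proof -
    have "g y \<in> U" using inv(4) UV(2) that by blast
    then show ?thesis using g'(1,2)[OF that] F by simp
  qed
  ultimately have "smooth_on V g"
    using inv(4,5) by (intro smooth_on_local_inverse_R2[OF UV(1,4) smooth_on_subset[OF assms(3) UV(2)]]) auto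
  then show ?thesis
    unfolding diffeo_germ_def using assms(4) UV inv smooth_on_subset[OF assms(3) UV(2)] by blast
qed

lemma has_derivative_left_inverse:
  assumes "open U" "p \<in> U" "\<And>x. x \<in> U \<Longrightarrow> g (f x) = x"
    and "(f has_derivative F) (at p)" "(g has_derivative G) (at (f p))"
  shows "G (F v) = v"
proof -
  have "((\<lambda>x. g (f x)) has_derivative (\<lambda>v. G (F v))) (at p)"
    by (rule has_derivative_compose[OF assms(4,5)])
  moreover have "((\<lambda>x. g (f x)) has_derivative (\<lambda>v. v)) (at p)"
    by (rule has_derivative_transform_within_open[OF has_derivative_ident assms(1,2)]) (simp add: assms(3))
  ultimately show ?thesis
    by (metis has_derivative_unique)
qed

lemma diffeo_germE:
  assumes "diffeo_germ \<phi>"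
  obtains U where "open U" "0 \<in> U" "smooth_on U \<phi>" "\<And>p. p \<in> U \<Longrightarrow> inj (frechet_derivative \<phi> (at p))"
proof -
  obtain U V \<psi> where UV: "open U" "open V" "0 \<in> U" "\<phi> ` U = V" "smooth_on U \<phi>" "smooth_on V \<psi>"
    "\<And>x. x \<in> U \<Longrightarrow> \<psi> (\<phi> x) = x"
    using assms unfolding diffeo_germ_def by metis
  have "inj (frechet_derivative \<phi> (at p))" if "p \<in> U" for p
  proof (rule inj_on_inverseI)
    fix v
    have "\<phi> p \<in> V" using UV(4) that by blast
    show "frechet_derivative \<psi> (at (\<phi> p)) (frechet_derivative \<phi> (at p) v) = v"
      by (rule has_derivative_left_inverse[of U p \<psi> \<phi>, OF UV(1) that UV(7)
            smooth_on_has_derivative[OF UV(5) that] smooth_on_has_derivative[OF UV(6) \<open>\<phi> p \<in> V\<close>]])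
  qed
  with UV that show ?thesis by blast
qed

lemma diffeo_germ_Pair:
  fixes f g :: "R2 \<Rightarrow> real"
  assumes "open U" "0 \<in> U" "smooth_on U f" "smooth_on U g" "f 0 = 0" "g 0 = 0"
    and "(f has_derivative Lf) (at 0)" "(g has_derivative Lg) (at 0)"
    and independent: "\<And>v. Lf v = 0 \<Longrightarrow> Lg v = 0 \<Longrightarrow> v = 0"
  shows "diffeo_germ (\<lambda>p. (f p, g p))"
proof (rule diffeo_germI[OF assms(1,2) smooth_on_Pair[OF assms(1,3,4)]])
  have deriv: "((\<lambda>p. (f p, g p)) has_derivative (\<lambda>v. (Lf v, Lg v))) (at 0)"
    by (rule has_derivative_Pair[OF assms(7,8)])
  show "inj (frechet_derivative (\<lambda>p. (f p, g p)) (at 0))"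
    unfolding frechet_derivative_at[OF deriv, symmetric] linear_injective_0[OF has_derivative_linear[OF deriv]]
    using independent by (simp add: zero_prod_def)
qed (use assms(5,6) in \<open>simp add: zero_prod_def\<close>)

section \<open>Transversal kernels and tangent cones\<close>

lemma linear_functional_inner:
  fixes l :: "'a::euclidean_space \<Rightarrow> real"
  assumes "linear l"
  shows "l = (\<lambda>x. (\<Sum>b\<in>Basis. l b *\<^sub>R b) \<bullet> x)"
proof
  fix x
  show "l x = (\<Sum>b\<in>Basis. l b *\<^sub>R b) \<bullet> x"
    using linear_sum_Basis[OF assms, of x] by (simp add: inner_sum_right inner_commute mult.commute)
qed

lemma transversal_kernels_independent:
  fixes l1 l2 :: "'a::euclidean_space \<Rightarrow> real"
  assumes "DIM('a) = 2" "linear l1" "linear l2" "l1 z1 \<noteq> 0" "l2 z2 \<noteq> 0"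
    and transversal: "{u + w | u w. l1 u = 0 \<and> l2 w = 0} = UNIV"
    and "l1 v = 0" "l2 v = 0"
  shows "v = 0"
proof -
  obtain a1 a2 where l: "l1 = (\<lambda>x. a1 \<bullet> x)" "l2 = (\<lambda>x. a2 \<bullet> x)"
    using linear_functional_inner assms(2,3) by metis
  have "a1 \<noteq> 0" "a2 \<noteq> 0"
    using assms(4,5) unfolding l by auto
  then have "dim {x. a1 \<bullet> x = 0} = 1" "dim {x. a2 \<bullet> x = 0} = 1"
    using dim_hyperplane[of a1] dim_hyperplane[of a2] assms(1) by simp_all
  moreover have "dim {u + w | u w. u \<in> {x. a1 \<bullet> x = 0} \<and> w \<in> {x. a2 \<bullet> x = 0}} = 2"
    using transversal assms(1) unfolding l by simp
  ultimately have "dim ({x. a1 \<bullet> x = 0} \<inter> {x. a2 \<bullet> x = 0}) = 0"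
    using dim_sums_Int[OF subspace_hyperplane subspace_hyperplane, of a1 a2] by simp
  then show "v = 0"
    using assms(7,8) unfolding l by auto
qed

lemma has_derivative_limit_direction_eq_0:
  fixes f :: "'a::real_normed_vector \<Rightarrow> 'b::real_normed_vector"
  assumes deriv: "(f has_derivative L) (at 0)" and "f 0 = 0"
    and x: "x \<longlonglongrightarrow> 0" "\<And>n. f (x n) = 0" and t: "\<And>n. t n > 0"
    and y: "(\<lambda>n. (1 / t n) *\<^sub>R x n) \<longlonglongrightarrow> v"
  shows "L v = 0"
proof -
  define y where "y n = (1 / t n) *\<^sub>R x n" for n
  have lin: "linear L" using deriv has_derivative_linear by blast
  \<comment> \<open>the relative error of the linearization, continuous at \<open>0\<close> because \<open>0 / 0 = 0\<close>\<close>
  define G where "G h = norm (f h - L h) / norm h" for h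
  have "G \<midarrow>0\<rightarrow> 0"
    using deriv \<open>f 0 = 0\<close> unfolding has_derivative_at G_def by simp
  then have "isCont G 0" unfolding continuous_at G_def by simp
  then have "(\<lambda>n. G (x n)) \<longlonglongrightarrow> G 0"
    using x(1) by (rule isCont_tendsto_compose)
  then have "(\<lambda>n. G (x n) * norm (y n)) \<longlonglongrightarrow> G 0 * norm v"
    using y unfolding y_def[symmetric] by (intro tendsto_mult tendsto_norm)
  moreover have "norm (L (y n)) = G (x n) * norm (y n)" for n
  proof (cases "x n = 0")
    case True
    then show ?thesis by (simp add: y_def linear_0[OF lin])
  next
    case False
    have "norm (L (y n)) = norm (L (x n)) / t n"
      using t[of n] by (simp add: y_def linear_cmul[OF lin])
    moreover have "norm (L (x n)) = G (x n) * norm (x n)"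
      using False x(2) by (simp add: G_def)
    moreover have "norm (y n) = norm (x n) / t n"
      using t[of n] by (simp add: y_def)
    ultimately show ?thesis by simp
  qed
  ultimately have "(\<lambda>n. norm (L (y n))) \<longlonglongrightarrow> 0"
    by (simp add: G_def)
  then have "(\<lambda>n. L (y n)) \<longlonglongrightarrow> 0"
    by (rule tendsto_norm_zero_cancel)
  moreover have "(\<lambda>n. L (y n)) \<longlonglongrightarrow> L v"
    using y unfolding y_def[symmetric]
    by (rule bounded_linear.tendsto[OF has_derivative_bounded_linear[OF deriv]])
  ultimately show "L v = 0"
    using LIMSEQ_unique by blast
qed

lemma tangent_cone0_subset_kernel:
  fixes f :: "R2 \<Rightarrow> 'b::real_normed_vector"
  assumes "(f has_derivative L) (at 0)" and "f 0 = 0" and "\<And>q. q \<in> D \<Longrightarrow> f q = 0"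
  shows "tangent_cone0 D \<subseteq> {v. L v = 0}"
proof
  fix v assume "v \<in> tangent_cone0 D"
  then obtain x t where x: "\<And>n. x n \<in> D" and t: "\<And>n. t n > 0" "t \<longlonglongrightarrow> 0"
    and y: "(\<lambda>n. (1 / t n) *\<^sub>R x n) \<longlonglongrightarrow> v"
    unfolding tangent_cone0_def by blast
  have "(\<lambda>n. t n *\<^sub>R ((1 / t n) *\<^sub>R x n)) \<longlonglongrightarrow> 0 *\<^sub>R v"
    using t(2) y by (rule tendsto_scaleR)
  moreover have "t n *\<^sub>R ((1 / t n) *\<^sub>R x n) = x n" for n
    using t(1)[of n] by simp
  ultimately have "x \<longlonglongrightarrow> 0" by simp
  then show "v \<in> {v. L v = 0}"
    using has_derivative_limit_direction_eq_0[OF assms(1,2) _ assms(3)[OF x] t(1) y] by simp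
qed

section \<open>Fold charts\<close>

definition fold_chart :: "(R2 \<Rightarrow> R2) \<Rightarrow> R2 set \<Rightarrow> (R2 \<Rightarrow> R2) \<Rightarrow> R2 set \<Rightarrow> (R2 \<Rightarrow> R2) \<Rightarrow> bool" where
  "fold_chart \<gamma> W \<phi> V \<psi> \<longleftrightarrow>
     open W \<and> 0 \<in> W \<and> open V \<and> \<gamma> ` W \<subseteq> V \<and>
     smooth_on W \<gamma> \<and> smooth_on W \<phi> \<and> smooth_on V \<psi> \<and> \<gamma> 0 = 0 \<and> \<phi> 0 = 0 \<and> \<psi> 0 = 0 \<and>
     (\<forall>p\<in>W. inj (frechet_derivative \<phi> (at p))) \<and> inj (frechet_derivative \<psi> (at 0)) \<and>
     (\<forall>p\<in>W. \<psi> (\<gamma> p) = fold_x (\<phi> p))"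

lemma fold_germ_fold_chart:
  assumes "fold_germ \<gamma>" "open U" "0 \<in> U" "smooth_on U \<gamma>"
  obtains W \<phi> V \<psi> where "W \<subseteq> U" "fold_chart \<gamma> W \<phi> V \<psi>"
proof -
  obtain \<phi> \<psi> where \<phi>: "diffeo_germ \<phi>" and \<psi>: "diffeo_germ \<psi>"
    and "\<forall>\<^sub>F p in nhds 0. \<psi> (\<gamma> p) = fold_x (\<phi> p)"
    using assms(1) unfolding fold_germ_def A_equivalent_def by blast
  then obtain E where E: "open E" "0 \<in> E" "\<And>p. p \<in> E \<Longrightarrow> \<psi> (\<gamma> p) = fold_x (\<phi> p)"
    unfolding eventually_nhds by blast
  obtain U\<phi> where U\<phi>: "open U\<phi>" "0 \<in> U\<phi>" "smooth_on U\<phi> \<phi>"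
    "\<And>p. p \<in> U\<phi> \<Longrightarrow> inj (frechet_derivative \<phi> (at p))"
    using diffeo_germE[OF \<phi>] by blast
  obtain V where V: "open V" "0 \<in> V" "smooth_on V \<psi>" "\<And>q. q \<in> V \<Longrightarrow> inj (frechet_derivative \<psi> (at q))"
    using diffeo_germE[OF \<psi>] by blast
  have zero: "\<gamma> 0 = 0" "\<phi> 0 = 0" "\<psi> 0 = 0"
    using assms(1) \<phi> \<psi> unfolding fold_germ_def map_germ_def diffeo_germ_def by blast+
  define W where "W = (U \<inter> \<gamma> -` V) \<inter> E \<inter> U\<phi>"
  have "open (U \<inter> \<gamma> -` V)"
    using continuous_open_preimage[OF smooth_on_continuous_on[OF assms(4)] assms(2) V(1)] .
  then have W: "open W" "0 \<in> W" "W \<subseteq> U" "W \<subseteq> U\<phi>" "W \<subseteq> E" "\<gamma> ` W \<subseteq> V"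
    unfolding W_def using E(1,2) U\<phi>(1,2) assms(3) zero(1) V(2) by auto
  have "fold_chart \<gamma> W \<phi> V \<psi>"
    unfolding fold_chart_def
    using W V(1,3) zero U\<phi>(4) V(4)[OF V(2)] E(3)
      smooth_on_subset[OF assms(4) W(3)] smooth_on_subset[OF U\<phi>(3) W(4)] by blast
  with W(3) show ?thesis by (rule that)
qed

lemma has_derivative_fold_x: "(fold_x has_derivative (\<lambda>u. (fst u, 2 * snd q * snd u))) (at q)"
proof -
  have fold_x: "fold_x = (\<lambda>q. (fst q, (snd q)^2))"
    by (rule ext) (simp add: fold_x_def)
  show ?thesis
    unfolding fold_x by (auto intro!: derivative_eq_intros)
qed

lemma fold_chart_derivative:
  assumes chart: "fold_chart \<gamma> W \<phi> V \<psi>" and "p \<in> W"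
  shows "frechet_derivative \<psi> (at (\<gamma> p)) (frechet_derivative \<gamma> (at p) v) =
    (fst (frechet_derivative \<phi> (at p) v), 2 * snd (\<phi> p) * snd (frechet_derivative \<phi> (at p) v))"
proof -
  have W: "open W" "smooth_on W \<gamma>" "smooth_on W \<phi>" "\<And>p. p \<in> W \<Longrightarrow> \<psi> (\<gamma> p) = fold_x (\<phi> p)"
    and V: "smooth_on V \<psi>" "\<gamma> p \<in> V"
    using chart \<open>p \<in> W\<close> unfolding fold_chart_def by blast+
  have "((\<lambda>p. \<psi> (\<gamma> p)) has_derivative
      (\<lambda>v. frechet_derivative \<psi> (at (\<gamma> p)) (frechet_derivative \<gamma> (at p) v))) (at p)"
    by (rule has_derivative_compose[OF smooth_on_has_derivative[OF W(2) \<open>p \<in> W\<close>]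
          smooth_on_has_derivative[OF V]])
  moreover have "((\<lambda>p. \<psi> (\<gamma> p)) has_derivative (\<lambda>v.
      (fst (frechet_derivative \<phi> (at p) v), 2 * snd (\<phi> p) * snd (frechet_derivative \<phi> (at p) v)))) (at p)"
    using has_derivative_compose[OF smooth_on_has_derivative[OF W(3) \<open>p \<in> W\<close>] has_derivative_fold_x]
    by (rule has_derivative_transform_within_open[OF _ W(1) \<open>p \<in> W\<close>]) (simp add: W(4))
  ultimately have "(\<lambda>v. frechet_derivative \<psi> (at (\<gamma> p)) (frechet_derivative \<gamma> (at p) v)) =
      (\<lambda>v. (fst (frechet_derivative \<phi> (at p) v), 2 * snd (\<phi> p) * snd (frechet_derivative \<phi> (at p) v)))"
    by (rule has_derivative_unique)
  then show ?thesis by (rule fun_cong)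
qed

lemma fold_chart_discriminant:
  assumes chart: "fold_chart \<gamma> W \<phi> V \<psi>" and "U \<subseteq> W"
  shows "\<gamma> ` singular_set \<gamma> U \<subseteq> {q. snd (\<psi> q) = 0}"
proof (rule image_subsetI)
  fix p assume "p \<in> singular_set \<gamma> U"
  then have "p \<in> W" and rank: "dim (range (frechet_derivative \<gamma> (at p))) < DIM(R2)"
    using \<open>U \<subseteq> W\<close> unfolding singular_set_def by auto
  have W: "smooth_on W \<gamma>" "smooth_on W \<phi>" "smooth_on V \<psi>" "\<gamma> p \<in> V"
    "inj (frechet_derivative \<phi> (at p))" "\<psi> (\<gamma> p) = fold_x (\<phi> p)"
    using chart \<open>p \<in> W\<close> unfolding fold_chart_def by blast+
  have lin: "linear (frechet_derivative \<gamma> (at p))" "linear (frechet_derivative \<phi> (at p))"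
    "linear (frechet_derivative \<psi> (at (\<gamma> p)))"
    using smooth_on_has_derivative[OF W(1) \<open>p \<in> W\<close>] smooth_on_has_derivative[OF W(2) \<open>p \<in> W\<close>]
      smooth_on_has_derivative[OF W(3,4)] by (simp_all add: has_derivative_linear)
  have "snd (\<phi> p) = 0"
  proof (rule ccontr)
    \<comment> \<open>off the fold locus \<open>fold_x \<circ> \<phi>\<close> is a local diffeomorphism, hence so is \<open>\<gamma>\<close>\<close>
    assume "snd (\<phi> p) \<noteq> 0"
    have "inj (frechet_derivative \<gamma> (at p))"
      unfolding linear_injective_0[OF lin(1)]
    proof clarify
      fix v assume "frechet_derivative \<gamma> (at p) v = 0"
      then have "(fst (frechet_derivative \<phi> (at p) v), 2 * snd (\<phi> p) * snd (frechet_derivative \<phi> (at p) v)) = 0"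
        using fold_chart_derivative[OF chart \<open>p \<in> W\<close>, of v] linear_0[OF lin(3)] by simp
      then have "frechet_derivative \<phi> (at p) v = 0"
        using \<open>snd (\<phi> p) \<noteq> 0\<close> by (simp add: prod_eq_iff)
      then show "v = 0"
        using W(5) linear_injective_0[OF lin(2)] by blast
    qed
    then have "dim (range (frechet_derivative \<gamma> (at p))) = DIM(R2)"
      using dim_image_eq[OF lin(1), of UNIV] by (simp add: inj_on_subset)
    with rank show False by simp
  qed
  with W(6) show "\<gamma> p \<in> {q. snd (\<psi> q) = 0}"
    by (simp add: fold_x_def)
qed

lemma fold_chart_transverse_coordinate:
  assumes chart: "fold_chart \<gamma> W \<phi> V \<psi>"
  shows "open V" "0 \<in> V" "smooth_on V (\<lambda>q. snd (\<psi> q))" "snd (\<psi> 0) = 0"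
    and "((\<lambda>q. snd (\<psi> q)) has_derivative (\<lambda>v. snd (frechet_derivative \<psi> (at 0) v))) (at 0)"
    and "\<exists>z. snd (frechet_derivative \<psi> (at 0) z) \<noteq> 0"
proof -
  show "open V" "0 \<in> V" "snd (\<psi> 0) = 0"
    using chart unfolding fold_chart_def by force+
  moreover have "smooth_on V \<psi>" "inj (frechet_derivative \<psi> (at 0))"
    using chart unfolding fold_chart_def by blast+
  ultimately show "smooth_on V (\<lambda>q. snd (\<psi> q))"
    and deriv: "((\<lambda>q. snd (\<psi> q)) has_derivative (\<lambda>v. snd (frechet_derivative \<psi> (at 0) v))) (at 0)"
    by (simp_all add: smooth_on_bounded_linear bounded_linear_snd has_derivative_snd
        smooth_on_has_derivative)
  have "surj (frechet_derivative \<psi> (at 0))"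
    using \<open>inj (frechet_derivative \<psi> (at 0))\<close> smooth_on_has_derivative[OF \<open>smooth_on V \<psi>\<close> \<open>0 \<in> V\<close>]
    by (simp add: has_derivative_linear linear_injective_imp_surjective)
  then obtain z where "frechet_derivative \<psi> (at 0) z = (0, 1)"
    by (metis surjD)
  then show "\<exists>z. snd (frechet_derivative \<psi> (at 0) z) \<noteq> 0"
    by (intro exI[of _ z]) simp
qed

lemma fold_chart_tangent_cone:
  assumes "fold_chart \<gamma> W \<phi> V \<psi>"
  shows "tangent_cone0 (\<gamma> ` singular_set \<gamma> W) \<subseteq> {v. snd (frechet_derivative \<psi> (at 0) v) = 0}"
  using fold_chart_discriminant[OF assms order_refl]
  by (intro tangent_cone0_subset_kernel[OF fold_chart_transverse_coordinate(5,4)[OF assms]]) blast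

lemma fold_charts_transversal:
  assumes chart1: "fold_chart \<gamma>1 W1 \<phi>1 V1 \<psi>1" and chart2: "fold_chart \<gamma>2 W2 \<phi>2 V2 \<psi>2"
    and transversal: "{u + v | u v. u \<in> tangent_cone0 (\<gamma>1 ` singular_set \<gamma>1 W1) \<and>
                                   v \<in> tangent_cone0 (\<gamma>2 ` singular_set \<gamma>2 W2)} = UNIV"
    and "snd (frechet_derivative \<psi>1 (at 0) u) = 0" "snd (frechet_derivative \<psi>2 (at 0) u) = 0"
  shows "u = 0"
proof -
  note T1 = fold_chart_transverse_coordinate[OF chart1]
  note T2 = fold_chart_transverse_coordinate[OF chart2]
  obtain z1 z2 where "snd (frechet_derivative \<psi>1 (at 0) z1) \<noteq> 0" "snd (frechet_derivative \<psi>2 (at 0) z2) \<noteq> 0"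
    using T1(6) T2(6) by blast
  moreover have "{u + w | u w. snd (frechet_derivative \<psi>1 (at 0) u) = 0 \<and> snd (frechet_derivative \<psi>2 (at 0) w) = 0} = UNIV"
    using transversal fold_chart_tangent_cone[OF chart1] fold_chart_tangent_cone[OF chart2] by blast
  ultimately show ?thesis
    using assms(4,5) has_derivative_linear[OF T1(5)] has_derivative_linear[OF T2(5)]
    by (intro transversal_kernels_independent[of "\<lambda>v. snd (frechet_derivative \<psi>1 (at 0) v)"
          "\<lambda>v. snd (frechet_derivative \<psi>2 (at 0) v)"]) auto
qed

lemma fold_chart_source_differentials_independent:
  assumes chart: "fold_chart \<gamma> W \<phi> V \<psi>"
    and independent: "\<And>u. L u = 0 \<Longrightarrow> snd (frechet_derivative \<psi> (at 0) u) = 0 \<Longrightarrow> u = 0"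
    and "L (frechet_derivative \<gamma> (at 0) v) = 0" "snd (frechet_derivative \<phi> (at 0) v) = 0"
  shows "v = 0"
proof -
  have W: "0 \<in> W" "\<gamma> 0 = 0" "\<phi> 0 = 0" "smooth_on W \<phi>" "inj (frechet_derivative \<phi> (at 0))"
    using chart unfolding fold_chart_def by blast+
  have D: "frechet_derivative \<psi> (at 0) (frechet_derivative \<gamma> (at 0) v) =
      (fst (frechet_derivative \<phi> (at 0) v), 0)"
    using fold_chart_derivative[OF chart W(1), of v] W(2,3) by simp
  then have "frechet_derivative \<gamma> (at 0) v = 0"
    using independent assms(3) by simp
  moreover have "linear (frechet_derivative \<psi> (at 0))"
    using chart fold_chart_transverse_coordinate(2)[OF chart] unfolding fold_chart_def
    by (metis has_derivative_linear smooth_on_has_derivative)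
  ultimately have "(fst (frechet_derivative \<phi> (at 0) v), 0) = (0 :: R2)"
    using D linear_0 by metis
  with assms(4) have "frechet_derivative \<phi> (at 0) v = 0"
    by (simp add: prod_eq_iff zero_prod_def)
  then show "v = 0"
    using W(5) linear_injective_0[OF has_derivative_linear[OF smooth_on_has_derivative[OF W(4,1)]]]
    by blast
qed

lemma fold_chart_source_coordinates:
  assumes chart: "fold_chart \<gamma> W \<phi> V \<psi>"
    and f: "open U" "0 \<in> U" "smooth_on U f" "f 0 = 0" "(f has_derivative Lf) (at 0)"
    and independent: "\<And>u. Lf u = 0 \<Longrightarrow> snd (frechet_derivative \<psi> (at 0) u) = 0 \<Longrightarrow> u = 0"
  shows "diffeo_germ (\<lambda>p. (f (\<gamma> p), snd (\<phi> p)))" and "diffeo_germ (\<lambda>p. (snd (\<phi> p), f (\<gamma> p)))"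
proof -
  have W: "open W" "0 \<in> W" "smooth_on W \<gamma>" "smooth_on W \<phi>" "\<gamma> 0 = 0" "\<phi> 0 = 0"
    using chart unfolding fold_chart_def by blast+
  define W' where "W' = W \<inter> \<gamma> -` U"
  have W': "open W'" "0 \<in> W'" "W' \<subseteq> W" "\<gamma> ` W' \<subseteq> U"
    unfolding W'_def using continuous_open_preimage[OF smooth_on_continuous_on[OF W(3)] W(1) f(1)]
      W(2,5) f(2) by auto
  have smooth: "smooth_on W' (\<lambda>p. f (\<gamma> p))" "smooth_on W' (\<lambda>p. snd (\<phi> p))"
    using smooth_on_compose[OF W'(1) smooth_on_subset[OF W(3) W'(3)] W'(4) f(3)]
      smooth_on_bounded_linear[OF W'(1) bounded_linear_snd smooth_on_subset[OF W(4) W'(3)]] .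
  have "((\<lambda>p. f (\<gamma> p)) has_derivative (\<lambda>v. Lf (frechet_derivative \<gamma> (at 0) v))) (at 0)"
    "((\<lambda>p. snd (\<phi> p)) has_derivative (\<lambda>v. snd (frechet_derivative \<phi> (at 0) v))) (at 0)"
    using has_derivative_compose[OF smooth_on_has_derivative[OF W(3,2)], of f Lf] f(5) W(5)
      has_derivative_snd[OF smooth_on_has_derivative[OF W(4,2)]] by simp_all
  then show "diffeo_germ (\<lambda>p. (f (\<gamma> p), snd (\<phi> p)))" "diffeo_germ (\<lambda>p. (snd (\<phi> p), f (\<gamma> p)))"
    using W'(1,2) smooth f(4) W(5,6) fold_chart_source_differentials_independent[OF chart independent]
    by (auto intro!: diffeo_germ_Pair)
qed

lemma fold_chart_eventually:
  assumes "fold_chart \<gamma> W \<phi> V \<psi>"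
  shows "\<forall>\<^sub>F p in nhds 0. snd (\<psi> (\<gamma> p)) = (snd (\<phi> p))^2"
  using assms unfolding fold_chart_def eventually_nhds by (auto simp: fold_x_def)

lemma transversal_fold_charts:
  assumes "fold_germ \<gamma>1" "fold_germ \<gamma>2" "discriminants_transversal \<gamma>1 \<gamma>2"
  obtains W1 \<phi>1 V1 \<psi>1 W2 \<phi>2 V2 \<psi>2
  where "fold_chart \<gamma>1 W1 \<phi>1 V1 \<psi>1" "fold_chart \<gamma>2 W2 \<phi>2 V2 \<psi>2"
    and "\<And>u. snd (frechet_derivative \<psi>1 (at 0) u) = 0 \<Longrightarrow> snd (frechet_derivative \<psi>2 (at 0) u) = 0 \<Longrightarrow> u = 0"
proof -
  obtain U where U: "open U" "0 \<in> U" "smooth_on U \<gamma>1" "smooth_on U \<gamma>2"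
    and transversal: "\<forall>U1 U2. open U1 \<and> open U2 \<and> 0 \<in> U1 \<and> 0 \<in> U2 \<and> U1 \<subseteq> U \<and> U2 \<subseteq> U \<longrightarrow>
      {u + v | u v. u \<in> tangent_cone0 (\<gamma>1 ` singular_set \<gamma>1 U1) \<and>
                    v \<in> tangent_cone0 (\<gamma>2 ` singular_set \<gamma>2 U2)} = UNIV"
    using assms(3) unfolding discriminants_transversal_def by (elim exE conjE)
  obtain W1 \<phi>1 V1 \<psi>1 where "W1 \<subseteq> U" and chart1: "fold_chart \<gamma>1 W1 \<phi>1 V1 \<psi>1"
    using fold_germ_fold_chart[OF assms(1) U(1,2,3)] .
  obtain W2 \<phi>2 V2 \<psi>2 where "W2 \<subseteq> U" and chart2: "fold_chart \<gamma>2 W2 \<phi>2 V2 \<psi>2"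
    using fold_germ_fold_chart[OF assms(2) U(1,2,4)] .
  have "{u + v | u v. u \<in> tangent_cone0 (\<gamma>1 ` singular_set \<gamma>1 W1) \<and>
                      v \<in> tangent_cone0 (\<gamma>2 ` singular_set \<gamma>2 W2)} = UNIV"
    using chart1 chart2 \<open>W1 \<subseteq> U\<close> \<open>W2 \<subseteq> U\<close> unfolding fold_chart_def
    by (intro transversal[rule_format]) blast
  with chart1 chart2 show ?thesis
    by (intro that fold_charts_transversal)
qed

theorem lemma3p1:
  fixes \<gamma>1 \<gamma>2 :: "R2 \<Rightarrow> R2"
  assumes "fold_germ \<gamma>1" and "fold_germ \<gamma>2"
    and "discriminants_transversal \<gamma>1 \<gamma>2"
  shows "\<exists>\<phi>1 \<phi>2 \<psi>. diffeo_germ \<phi>1 \<and> diffeo_germ \<phi>2 \<and> diffeo_germ \<psi> \<and>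
           (\<forall>\<^sub>F p in nhds 0. \<psi> (\<gamma>1 p) = fold_x (\<phi>1 p)) \<and>
           (\<forall>\<^sub>F p in nhds 0. \<psi> (\<gamma>2 p) = fold_y (\<phi>2 p))"
proof -
  obtain W1 \<phi>1 V1 \<psi>1 W2 \<phi>2 V2 \<psi>2
    where chart1: "fold_chart \<gamma>1 W1 \<phi>1 V1 \<psi>1" and chart2: "fold_chart \<gamma>2 W2 \<phi>2 V2 \<psi>2"
    and independent: "\<And>u. snd (frechet_derivative \<psi>1 (at 0) u) = 0 \<Longrightarrow>
                           snd (frechet_derivative \<psi>2 (at 0) u) = 0 \<Longrightarrow> u = 0"
    using transversal_fold_charts[OF assms] by blast
  note T1 = fold_chart_transverse_coordinate[OF chart1]
  note T2 = fold_chart_transverse_coordinate[OF chart2]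
  \<comment> \<open>the new target coordinates are the two functions cutting out the discriminants\<close>
  define \<Psi> where "\<Psi> q = (snd (\<psi>2 q), snd (\<psi>1 q))" for q
  define \<Phi>1 where "\<Phi>1 p = (snd (\<psi>2 (\<gamma>1 p)), snd (\<phi>1 p))" for p
  define \<Phi>2 where "\<Phi>2 p = (snd (\<phi>2 p), snd (\<psi>1 (\<gamma>2 p)))" for p
  have "diffeo_germ \<Psi>"
    unfolding \<Psi>_def using independent T1(2) T2(2)
    by (intro diffeo_germ_Pair[OF open_Int[OF T1(1) T2(1)] _ smooth_on_subset[OF T2(3)]
          smooth_on_subset[OF T1(3)] T2(4) T1(4) T2(5) T1(5)]) auto
  moreover have "diffeo_germ \<Phi>1" "diffeo_germ \<Phi>2"
    unfolding \<Phi>1_def \<Phi>2_def using independent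
    by (intro fold_chart_source_coordinates(1)[OF chart1 T2(1-5)]
        fold_chart_source_coordinates(2)[OF chart2 T1(1-5)]; blast)+
  moreover have "\<forall>\<^sub>F p in nhds 0. \<Psi> (\<gamma>1 p) = fold_x (\<Phi>1 p)"
    using fold_chart_eventually[OF chart1] by eventually_elim (simp add: \<Psi>_def \<Phi>1_def fold_x_def)
  moreover have "\<forall>\<^sub>F p in nhds 0. \<Psi> (\<gamma>2 p) = fold_y (\<Phi>2 p)"
    using fold_chart_eventually[OF chart2] by eventually_elim (simp add: \<Psi>_def \<Phi>2_def fold_y_def)
  ultimately show ?thesis
    by blast
qed

end
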